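(* Let $G$ be a connected Lie group, $\Gamma$ a discrete subgroup of $H=PSL(2,\mathbb{R})\times G$ and $X=\Gamma\backslash H$. If $\Gamma$ contains a semi-parabolic element, then there is a point $x\in X$ whose positive semi-orbit under $D^+$ diverges: for every sequence $d_n=\operatorname{diag}(\lambda_n,\lambda_n^{-1})\in D^+$ with $\lambda_n\to+\infty$, the sequence $x d_n$ has no convergent subsequence in $X$.
   Context: $D^+=\{\begin{pmatrix}\lambda&0\\0&\lambda^{-1}\end{pmatrix}:\lambda>1\}\subset PSL(2,\mathbb{R})$ acts on $X$ on the right by $\Gamma(f,g)d=\Gamma(fd,g)$. An element $(f,g)\in PSL(2,\mathbb{R})\times G$ is semi-parabolic if $f$ is conjugate in $PSL(2,\mathbb{R})$ to an element $u\neq Id$ of $U=\{\begin{pmatrix}1&t\\0&1\end{pmatrix}\}$. *)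

theory Defs
  imports "HOL-Analysis.Analysis" "HOL-Algebra.Coset"
begin

definition quotient_topology :: "'a topology \<Rightarrow> ('a \<Rightarrow> 'b) \<Rightarrow> 'b topology" where
  "quotient_topology X f =
     topology (\<lambda>U. U \<subseteq> f ` topspace X \<and> openin X {x \<in> topspace X. f x \<in> U})"

definition topological_group :: "('g, 'b) monoid_scheme \<Rightarrow> 'g topology \<Rightarrow> bool" where
  "topological_group G T \<longleftrightarrow>
     group G \<and> topspace T = carrier G \<and>
     continuous_map (prod_topology T T) T (\<lambda>(x, y). x \<otimes>\<^bsub>G\<^esub> y) \<and>
     continuous_map T T (\<lambda>x. inv\<^bsub>G\<^esub> x)"

text \<open>No small subgroups: some neighbourhood of the identity contains no nontrivial subgroup.
  (Gleason--Montgomery--Zippin: a locally compact Hausdorff group is a Lie group iff it has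
  no small subgroups.)\<close>
definition no_small_subgroups :: "('g, 'b) monoid_scheme \<Rightarrow> 'g topology \<Rightarrow> bool" where
  "no_small_subgroups G T \<longleftrightarrow>
     (\<exists>U. openin T U \<and> \<one>\<^bsub>G\<^esub> \<in> U \<and>
          (\<forall>K. subgroup K G \<and> K \<subseteq> U \<longrightarrow> K = {\<one>\<^bsub>G\<^esub>}))"

definition lie_group :: "('g, 'b) monoid_scheme \<Rightarrow> 'g topology \<Rightarrow> bool" where
  "lie_group G T \<longleftrightarrow> topological_group G T \<and> Hausdorff_space T \<and>
     locally_compact_space T \<and> no_small_subgroups G T"

type_synonym mat2 = "real^2^2"

definition SL2 :: "mat2 set" where
  "SL2 = {A. det A = 1}"

definition psl_class :: "mat2 \<Rightarrow> mat2 set" where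
  "psl_class A = {A, - A}"

definition PSL2 :: "mat2 set monoid" where
  "PSL2 = \<lparr> carrier = psl_class ` SL2,
            mult = (\<lambda>P Q. {a ** b | a b. a \<in> P \<and> b \<in> Q}),
            one = psl_class (mat 1) \<rparr>"

definition PSL2_top :: "mat2 set topology" where
  "PSL2_top = quotient_topology (subtopology euclidean SL2) psl_class"

definition mat2_of :: "real \<Rightarrow> real \<Rightarrow> real \<Rightarrow> real \<Rightarrow> mat2" where
  "mat2_of a b c d = (\<chi> i j. if i = 1 then (if j = 1 then a else b) else (if j = 1 then c else d))"

definition psl_diag :: "real \<Rightarrow> mat2 set" where
  "psl_diag l = psl_class (mat2_of l 0 0 (1 / l))"

definition psl_unip :: "real \<Rightarrow> mat2 set" where
  "psl_unip t = psl_class (mat2_of 1 t 0 1)"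

definition D_plus :: "mat2 set set" where
  "D_plus = {psl_diag l | l. l > 1}"

definition U_group :: "mat2 set set" where
  "U_group = range psl_unip"

definition Hgrp :: "('g, 'b) monoid_scheme \<Rightarrow> (mat2 set \<times> 'g) monoid" where
  "Hgrp G = PSL2 \<times>\<times> G"

definition Htop :: "'g topology \<Rightarrow> (mat2 set \<times> 'g) topology" where
  "Htop T = prod_topology PSL2_top T"

definition discrete_subgroup ::
    "('a, 'b) monoid_scheme \<Rightarrow> 'a topology \<Rightarrow> 'a set \<Rightarrow> bool" where
  "discrete_subgroup H T \<Gamma> \<longleftrightarrow> subgroup \<Gamma> H \<and>
     (\<forall>\<gamma>\<in>\<Gamma>. \<exists>V. openin T V \<and> V \<inter> \<Gamma> = {\<gamma>})"

definition semi_parabolic :: "('g, 'b) monoid_scheme \<Rightarrow> mat2 set \<times> 'g \<Rightarrow> bool" where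
  "semi_parabolic G fg \<longleftrightarrow> fg \<in> carrier (Hgrp G) \<and>
     (\<exists>c\<in>carrier PSL2. \<exists>u\<in>U_group. u \<noteq> \<one>\<^bsub>PSL2\<^esub> \<and>
        fst fg = c \<otimes>\<^bsub>PSL2\<^esub> u \<otimes>\<^bsub>PSL2\<^esub> inv\<^bsub>PSL2\<^esub> c)"

definition Xspace :: "('g, 'b) monoid_scheme \<Rightarrow> (mat2 set \<times> 'g) set \<Rightarrow> (mat2 set \<times> 'g) set set" where
  "Xspace G \<Gamma> = (\<lambda>h. \<Gamma> #>\<^bsub>Hgrp G\<^esub> h) ` carrier (Hgrp G)"

definition Xtop :: "('g, 'b) monoid_scheme \<Rightarrow> 'g topology \<Rightarrow> (mat2 set \<times> 'g) set
                     \<Rightarrow> (mat2 set \<times> 'g) set topology" where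
  "Xtop G T \<Gamma> = quotient_topology (Htop T) (\<lambda>h. \<Gamma> #>\<^bsub>Hgrp G\<^esub> h)"

definition Xact :: "('g, 'b) monoid_scheme \<Rightarrow> (mat2 set \<times> 'g) set \<Rightarrow> mat2 set \<Rightarrow> (mat2 set \<times> 'g) set" where
  "Xact G x d = x #>\<^bsub>Hgrp G\<^esub> (d, \<one>\<^bsub>G\<^esub>)"

end

theory Submission
  imports Defs
begin

text \<open>
  Pick \<open>(f, g) \<in> \<Gamma>\<close> with \<open>f = c u(t) c\<^sup>-\<^sup>1\<close>, where \<open>u(t)\<close> is unipotent with
  parameter \<open>t \<noteq> 0\<close>, and let \<open>x = \<Gamma> (c, 1)\<close>. Since \<open>d(\<lambda>)\<^sup>-\<^sup>1 u(t) d(\<lambda>) = u(t/\<lambda>\<^sup>2)\<close>,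
  each representative \<open>w = \<beta> (c d(\<lambda>), 1)\<close>, \<open>\<beta> \<in> \<Gamma>\<close>, of \<open>x d(\<lambda>)\<close> yields the element
  \<open>\<beta> (f, g) \<beta>\<^sup>-\<^sup>1 = w (u(t/\<lambda>\<^sup>2), g) w\<^sup>-\<^sup>1\<close> of \<open>\<Gamma>\<close>. If \<open>x d(\<lambda>\<^sub>k)\<close> converged in \<open>X\<close>,
  the representatives could all be taken in one small neighbourhood, so the quotients of
  these elements would lie in a neighbourhood of the identity isolating it in \<open>\<Gamma>\<close>, and
  the elements would be eventually constant. But their \<open>PSL(2,\<real>)\<close>-components are
  conjugates of \<open>u(t/\<lambda>\<^sub>k\<^sup>2)\<close> by bounded matrices, which tend to the identity without
  reaching it.
\<close>

section \<open>2 by 2 matrices\<close>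

lemma mat2_of_nth [simp]:
  "mat2_of a b c d $ 1 $ 1 = a" "mat2_of a b c d $ 1 $ 2 = b"
  "mat2_of a b c d $ 2 $ 1 = c" "mat2_of a b c d $ 2 $ 2 = d"
  by (simp_all add: mat2_of_def)

lemma mat2_of_components: "M = mat2_of (M$1$1) (M$1$2) (M$2$1) (M$2$2)"
  by (simp add: vec_eq_iff forall_2 mat2_of_def)

lemma mat2_cases: obtains a b c d where "M = mat2_of a b c d"
  using mat2_of_components by blast

lemma mat2_of_eq_iff:
  "mat2_of a b c d = mat2_of a' b' c' d' \<longleftrightarrow> a = a' \<and> b = b' \<and> c = c' \<and> d = d'"
  by (metis mat2_of_nth)

lemma mat2_of_mult:
  "mat2_of a b c d ** mat2_of a' b' c' d' =
     mat2_of (a*a' + b*c') (a*b' + b*d') (c*a' + d*c') (c*b' + d*d')"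
  by (simp add: vec_eq_iff forall_2 matrix_matrix_mult_def sum_2 mat2_of_def)

lemma mat2_of_uminus: "- mat2_of a b c d = mat2_of (-a) (-b) (-c) (-d)"
  by (simp add: vec_eq_iff forall_2 mat2_of_def)

lemma mat2_of_diff: "mat2_of a b c d - mat2_of a' b' c' d' = mat2_of (a-a') (b-b') (c-c') (d-d')"
  by (simp add: vec_eq_iff forall_2 mat2_of_def)

lemma mat_1_eq_mat2_of: "mat 1 = mat2_of 1 0 0 1"
  by (simp add: vec_eq_iff forall_2 mat2_of_def mat_def)

lemma det_mat2_of: "det (mat2_of a b c d) = a*d - b*c"
  by (simp add: det_2)

lemma norm_mat2_of: "norm (mat2_of a b c d) = sqrt (a^2 + b^2 + c^2 + d^2)"
  by (simp add: norm_vec_def L2_set_def sum_2 add.assoc)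

definition adj2 :: "mat2 \<Rightarrow> mat2" where
  "adj2 A = mat2_of (A$2$2) (-(A$1$2)) (-(A$2$1)) (A$1$1)"

definition unip :: "real \<Rightarrow> mat2" where
  "unip t = mat2_of 1 t 0 1"

definition diag2 :: "real \<Rightarrow> mat2" where
  "diag2 l = mat2_of l 0 0 (1 / l)"

lemma adj2_mat2_of: "adj2 (mat2_of a b c d) = mat2_of d (-b) (-c) a"
  by (simp add: adj2_def)

lemmas mat2_simps = mat2_of_mult mat2_of_uminus mat2_of_diff mat_1_eq_mat2_of det_mat2_of
  mat2_of_eq_iff adj2_mat2_of unip_def diag2_def

lemma matrix_mul_uminus_left:
  fixes A B :: mat2
  shows "(- A) ** B = - (A ** B)"
  by (cases A rule: mat2_cases, cases B rule: mat2_cases) (simp add: mat2_simps)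

lemma matrix_mul_uminus_right:
  fixes A B :: mat2
  shows "A ** (- B) = - (A ** B)"
  by (cases A rule: mat2_cases, cases B rule: mat2_cases) (simp add: mat2_simps)

lemma adj2_mult: "adj2 (A ** B) = adj2 B ** adj2 A"
  by (cases A rule: mat2_cases, cases B rule: mat2_cases) (simp add: mat2_simps algebra_simps)

lemma adj2_adj2 [simp]: "adj2 (adj2 A) = A"
  by (cases A rule: mat2_cases) (simp add: mat2_simps)

lemma adj2_one [simp]: "adj2 (mat 1) = mat 1"
  by (simp add: mat2_simps)

lemma adj2_mult_self: "A \<in> SL2 \<Longrightarrow> adj2 A ** A = mat 1"
  by (cases A rule: mat2_cases) (simp add: SL2_def mat2_simps algebra_simps)

lemma tendsto_mat2_of [tendsto_intros]:
  assumes "(a \<longlongrightarrow> a0) F" "(b \<longlongrightarrow> b0) F" "(c \<longlongrightarrow> c0) F" "(d \<longlongrightarrow> d0) F"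
  shows "((\<lambda>x. mat2_of (a x) (b x) (c x) (d x)) \<longlongrightarrow> mat2_of a0 b0 c0 d0) F"
proof (intro vec_tendstoI)
  fix i j :: 2
  show "((\<lambda>x. mat2_of (a x) (b x) (c x) (d x) $ i $ j) \<longlongrightarrow> mat2_of a0 b0 c0 d0 $ i $ j) F"
    using assms exhaust_2[of i] exhaust_2[of j] by auto
qed

lemma matrix_mul_mat2_entries:
  fixes A B :: mat2
  shows "A ** B = mat2_of (A$1$1 * B$1$1 + A$1$2 * B$2$1) (A$1$1 * B$1$2 + A$1$2 * B$2$2)
     (A$2$1 * B$1$1 + A$2$2 * B$2$1) (A$2$1 * B$1$2 + A$2$2 * B$2$2)"
  by (subst mat2_of_components[of A], subst mat2_of_components[of B]) (simp add: mat2_of_mult)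

lemma tendsto_matrix_mul_mat2 [tendsto_intros]:
  fixes f g :: "'a \<Rightarrow> mat2"
  assumes "(f \<longlongrightarrow> A) F" "(g \<longlongrightarrow> B) F"
  shows "((\<lambda>x. f x ** g x) \<longlongrightarrow> A ** B) F"
  unfolding matrix_mul_mat2_entries[of "f _"] matrix_mul_mat2_entries[of A]
  by (intro tendsto_intros assms)

lemma tendsto_adj2 [tendsto_intros]:
  "(f \<longlongrightarrow> A) F \<Longrightarrow> ((\<lambda>x. adj2 (f x)) \<longlongrightarrow> adj2 A) F"
  unfolding adj2_def by (intro tendsto_intros)

lemma SL2_mult: "A \<in> SL2 \<Longrightarrow> B \<in> SL2 \<Longrightarrow> A ** B \<in> SL2"
  by (simp add: SL2_def det_mul)

lemma SL2_one: "mat 1 \<in> SL2"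
  by (simp add: SL2_def)

lemma SL2_adj2: "A \<in> SL2 \<Longrightarrow> adj2 A \<in> SL2"
  by (cases A rule: mat2_cases) (simp add: SL2_def mat2_simps algebra_simps)

lemma SL2_uminus: "A \<in> SL2 \<Longrightarrow> - A \<in> SL2"
  by (cases A rule: mat2_cases) (simp add: SL2_def mat2_simps algebra_simps)

lemma SL2_unip: "unip t \<in> SL2"
  by (simp add: SL2_def mat2_simps)

lemma SL2_diag2: "l \<noteq> 0 \<Longrightarrow> diag2 l \<in> SL2"
  by (simp add: SL2_def mat2_simps)

lemma unip_eq_one_iff: "unip t = mat 1 \<longleftrightarrow> t = 0"
  by (simp add: mat2_simps)

lemma SL2_first_column_nonzero: "A \<in> SL2 \<Longrightarrow> (A$1$1)^2 + (A$2$1)^2 > 0"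
  by (cases A rule: mat2_cases) (auto simp: SL2_def mat2_simps sum_power2_gt_zero_iff)

lemma diag2_conj_unip: "l \<noteq> 0 \<Longrightarrow> adj2 (diag2 l) ** unip t ** diag2 l = unip (t / l^2)"
  by (simp add: mat2_simps field_simps power2_eq_square)

lemma unip_conj:
  assumes "A \<in> SL2"
  shows "A ** unip s ** adj2 A =
    mat2_of (1 - s * A$1$1 * A$2$1) (s * (A$1$1)^2) (- s * (A$2$1)^2) (1 + s * A$1$1 * A$2$1)"
proof -
  obtain a b c d where A: "A = mat2_of a b c d" by (rule mat2_cases)
  with assms have "a*d - b*c = 1" by (simp add: SL2_def mat2_simps)
  then show ?thesis unfolding A by (simp add: mat2_simps algebra_simps power2_eq_square)
qed

lemma unip_conj_eq_if_psl_class_eq: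
  assumes "A \<in> SL2" "B \<in> SL2"
    and "psl_class (A ** unip s ** adj2 A) = psl_class (B ** unip s' ** adj2 B)"
  shows "A ** unip s ** adj2 A = B ** unip s' ** adj2 B"
proof -
  have trace2: "(A ** unip s ** adj2 A) $ 1 $ 1 + (A ** unip s ** adj2 A) $ 2 $ 2 = 2"
    if "A \<in> SL2" for A s
    by (simp add: unip_conj[OF that])
  show ?thesis
    using assms(3) trace2[OF assms(1), of s] trace2[OF assms(2), of s']
    by (auto simp: psl_class_def doubleton_eq_iff)
qed

lemma dist_unip_conj_one:
  assumes "A \<in> SL2"
  shows "dist (A ** unip s ** adj2 A) (mat 1) = \<bar>s\<bar> * ((A$1$1)^2 + (A$2$1)^2)"
proof -
  define a c where "a = A$1$1" and "c = A$2$1"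
  have "dist (A ** unip s ** adj2 A) (mat 1) =
      sqrt ((s * (a^2 + c^2))^2)"
    unfolding dist_norm unip_conj[OF assms]
    by (simp add: mat2_simps norm_mat2_of a_def c_def power2_eq_square algebra_simps)
  then show ?thesis
    by (simp add: a_def c_def abs_mult)
qed

lemma dist_unip_conj_one_le:
  assumes "A \<in> SL2" "norm A \<le> R"
  shows "dist (A ** unip s ** adj2 A) (mat 1) \<le> \<bar>s\<bar> * R^2"
proof -
  have "(A$1$1)^2 + (A$2$1)^2 \<le> (norm A)^2"
    by (subst (2) mat2_of_components) (simp add: norm_mat2_of)
  also have "\<dots> \<le> R^2"
    using assms(2) by (intro power_mono) auto
  finally show ?thesis
    by (simp add: dist_unip_conj_one[OF assms(1)] mult_left_mono)
qed

lemma unip_conjugates_not_eventually_constant: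
  assumes "bounded S" and "s \<longlonglongrightarrow> 0" and "\<And>k. s k \<noteq> 0"
    and const: "\<And>k. k \<ge> N \<Longrightarrow> \<exists>A\<in>S \<inter> SL2. A ** unip (s k) ** adj2 A = M"
  shows False
proof -
  obtain R where R: "\<And>A. A \<in> S \<Longrightarrow> norm A \<le> R"
    using \<open>bounded S\<close> by (auto simp: bounded_iff)
  have "dist M (mat 1) \<le> \<bar>s k\<bar> * R^2" if k: "k \<ge> N" for k
  proof -
    obtain A where A: "A \<in> S" "A \<in> SL2" "M = A ** unip (s k) ** adj2 A"
      using const[OF k] by blast
    then show ?thesis
      using dist_unip_conj_one_le[OF A(2) R[OF A(1)]] by simp
  qed
  then have "eventually (\<lambda>k. dist M (mat 1) \<le> \<bar>s k\<bar> * R^2) sequentially"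
    unfolding eventually_sequentially by blast
  moreover have "(\<lambda>k. \<bar>s k\<bar> * R^2) \<longlonglongrightarrow> 0"
    using tendsto_mult_left_zero[OF tendsto_rabs_zero[OF assms(2)]] by simp
  ultimately have "dist M (mat 1) \<le> 0"
    by (intro tendsto_lowerbound[of "\<lambda>k. \<bar>s k\<bar> * R^2"]) auto
  moreover obtain A where "A \<in> SL2" "M = A ** unip (s N) ** adj2 A"
    using const[of N] by blast
  then have "dist M (mat 1) > 0"
    using assms(3)[of N] by (simp add: dist_unip_conj_one SL2_first_column_nonzero)
  ultimately show False by simp
qed

lemma psl_class_eq_iff: "psl_class A = psl_class B \<longleftrightarrow> B = A \<or> B = - A"
  by (auto simp: psl_class_def doubleton_eq_iff)

lemma psl_class_mult: "psl_class A \<otimes>\<^bsub>PSL2\<^esub> psl_class B = psl_class (A ** B)"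
proof -
  have "{a ** b |a b. a \<in> {A, - A} \<and> b \<in> {B, - B}} = {A ** B, - (A ** B)}"
    by (auto simp: matrix_mul_uminus_left matrix_mul_uminus_right)
      (metis matrix_mul_uminus_left)
  then show ?thesis
    by (simp add: PSL2_def psl_class_def)
qed

lemma carrier_PSL2: "carrier PSL2 = psl_class ` SL2"
  by (simp add: PSL2_def)

lemma one_PSL2: "\<one>\<^bsub>PSL2\<^esub> = psl_class (mat 1)"
  by (simp add: PSL2_def)

lemma group_PSL2: "group PSL2"
proof (rule groupI)
  fix x
  assume "x \<in> carrier PSL2"
  then obtain A where "A \<in> SL2" "x = psl_class A"
    by (auto simp: carrier_PSL2)
  then show "\<exists>y\<in>carrier PSL2. y \<otimes>\<^bsub>PSL2\<^esub> x = \<one>\<^bsub>PSL2\<^esub>"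
    by (intro bexI[of _ "psl_class (adj2 A)"])
      (auto simp: carrier_PSL2 psl_class_mult one_PSL2 adj2_mult_self SL2_adj2)
qed (auto simp: carrier_PSL2 one_PSL2 psl_class_mult SL2_mult SL2_one matrix_mul_assoc)

lemma psl_class_inv: "A \<in> SL2 \<Longrightarrow> inv\<^bsub>PSL2\<^esub> (psl_class A) = psl_class (adj2 A)"
  by (rule group.inv_equality[OF group_PSL2])
    (auto simp: carrier_PSL2 psl_class_mult one_PSL2 adj2_mult_self SL2_adj2)

section \<open>The topology of PSL(2,R)\<close>

lemma openin_quotient_topology:
  "openin (quotient_topology X f) U \<longleftrightarrow>
     U \<subseteq> f ` topspace X \<and> openin X {x \<in> topspace X. f x \<in> U}"
proof -
  have "istopology (\<lambda>U. U \<subseteq> f ` topspace X \<and> openin X {x \<in> topspace X. f x \<in> U})"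
  proof -
    have "{x \<in> topspace X. f x \<in> \<Union>K} = (\<Union>U\<in>K. {x \<in> topspace X. f x \<in> U})" for K
      by auto
    moreover have "{x \<in> topspace X. f x \<in> S \<inter> T} =
        {x \<in> topspace X. f x \<in> S} \<inter> {x \<in> topspace X. f x \<in> T}" for S T
      by auto
    ultimately show ?thesis
      unfolding istopology_def by auto
  qed
  then show ?thesis
    by (simp add: quotient_topology_def)
qed

lemma topspace_quotient_topology: "topspace (quotient_topology X f) = f ` topspace X"
proof (rule antisym)
  show "topspace (quotient_topology X f) \<subseteq> f ` topspace X"
    using openin_quotient_topology[of X f "topspace (quotient_topology X f)"] by auto
  have "{x \<in> topspace X. f x \<in> f ` topspace X} = topspace X"
    by auto
  then have "openin (quotient_topology X f) (f ` topspace X)"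
    by (simp add: openin_quotient_topology)
  then show "f ` topspace X \<subseteq> topspace (quotient_topology X f)"
    by (rule openin_subset)
qed

lemma topspace_PSL2_top: "topspace PSL2_top = carrier PSL2"
  by (simp add: PSL2_top_def topspace_quotient_topology carrier_PSL2)

lemma openin_PSL2_top:
  "openin PSL2_top U \<longleftrightarrow> U \<subseteq> carrier PSL2 \<and> openin (top_of_set SL2) {M \<in> SL2. psl_class M \<in> U}"
  by (simp add: PSL2_top_def openin_quotient_topology carrier_PSL2)

lemma openin_PSL2_top_image_ball: "openin PSL2_top (psl_class ` (ball Y r \<inter> SL2))"
proof -
  have "{M \<in> SL2. psl_class M \<in> psl_class ` (ball Y r \<inter> SL2)} = SL2 \<inter> (ball Y r \<union> ball (- Y) r)"
  proof -
    have "dist Y (- M) = dist (- Y) M" for M :: mat2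
      using dist_minus[of Y "- M"] by simp
    then show ?thesis
      by (auto simp: psl_class_eq_iff image_iff SL2_uminus dist_minus intro: bexI[of _ "- _"])
  qed
  moreover have "openin (top_of_set SL2) (SL2 \<inter> (ball Y r \<union> ball (- Y) r))"
    by (intro openin_open_Int open_Un open_ball)
  ultimately show ?thesis
    by (auto simp: openin_PSL2_top carrier_PSL2)
qed

lemma continuous_map_PSL2_top_left_mult:
  assumes "a \<in> carrier PSL2"
  shows "continuous_map PSL2_top PSL2_top (\<lambda>p. a \<otimes>\<^bsub>PSL2\<^esub> p)"
proof -
  obtain A where A: "A \<in> SL2" "a = psl_class A"
    using assms by (auto simp: carrier_PSL2)
  have cont: "continuous_map (top_of_set SL2) (top_of_set SL2) (\<lambda>M. A ** M)"
    unfolding continuous_map_in_subtopology using A(1)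
    by (auto simp: SL2_mult continuous_on_def intro!: tendsto_intros)
  show ?thesis
    unfolding continuous_map_def
  proof (intro conjI allI impI)
    show "(\<lambda>p. a \<otimes>\<^bsub>PSL2\<^esub> p) \<in> topspace PSL2_top \<rightarrow> topspace PSL2_top"
      by (auto simp: topspace_PSL2_top carrier_PSL2 A psl_class_mult SL2_mult)
  next
    fix U
    assume "openin PSL2_top U"
    then have "openin (top_of_set SL2) {M \<in> topspace (top_of_set SL2). A ** M \<in> {N \<in> SL2. psl_class N \<in> U}}"
      by (intro openin_continuous_map_preimage[OF cont]) (simp add: openin_PSL2_top)
    moreover have "{M \<in> topspace (top_of_set SL2). A ** M \<in> {N \<in> SL2. psl_class N \<in> U}} =
        {M \<in> SL2. psl_class M \<in> {p \<in> topspace PSL2_top. a \<otimes>\<^bsub>PSL2\<^esub> p \<in> U}}"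
      using A by (auto simp: topspace_PSL2_top carrier_PSL2 psl_class_mult SL2_mult)
    ultimately show "openin PSL2_top {p \<in> topspace PSL2_top. a \<otimes>\<^bsub>PSL2\<^esub> p \<in> U}"
      by (simp add: openin_PSL2_top topspace_PSL2_top)
  qed
qed

lemma PSL2_top_nhds_one_quotients:
  assumes "openin PSL2_top V" "psl_class (mat 1) \<in> V"
  obtains \<epsilon> where "\<epsilon> > 0"
    "\<And>P Q. P \<in> SL2 \<Longrightarrow> Q \<in> SL2 \<Longrightarrow> dist P (mat 1) < \<epsilon> \<Longrightarrow> dist Q (mat 1) < \<epsilon> \<Longrightarrow>
       psl_class (adj2 P ** Q) \<in> V"
proof -
  obtain Op where Op: "open Op" "{M \<in> SL2. psl_class M \<in> V} = SL2 \<inter> Op"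
    using assms(1) by (auto simp: openin_PSL2_top openin_open)
  have "continuous_on UNIV (\<lambda>p. adj2 (fst p) ** snd p :: mat2)"
    unfolding continuous_on_def
    by (intro ballI tendsto_matrix_mul_mat2 tendsto_adj2 tendsto_fst tendsto_snd tendsto_ident_at)
  then have "open ((\<lambda>p. adj2 (fst p) ** snd p) -` Op)"
    using Op(1) by (simp add: open_vimage)
  moreover have "(mat 1, mat 1) \<in> (\<lambda>p. adj2 (fst p) ** snd p) -` Op"
    using Op(2) assms(2) SL2_one by auto
  ultimately obtain A B where AB: "open A" "open B" "(mat 1, mat 1) \<in> A \<times> B"
      "A \<times> B \<subseteq> (\<lambda>p. adj2 (fst p) ** snd p) -` Op"
    by (rule open_prod_elim)
  obtain \<epsilon> where \<epsilon>: "\<epsilon> > 0" "ball (mat 1) \<epsilon> \<subseteq> A \<inter> B"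
    using AB open_contains_ball[of "A \<inter> B"] by blast
  show ?thesis
  proof (rule that[OF \<epsilon>(1)])
    fix P Q
    assume PQ: "P \<in> SL2" "Q \<in> SL2" "dist P (mat 1) < \<epsilon>" "dist Q (mat 1) < \<epsilon>"
    then have "(P, Q) \<in> A \<times> B"
      using \<epsilon>(2) by (auto simp: dist_commute)
    then have "adj2 P ** Q \<in> SL2 \<inter> Op"
      using AB(4) PQ by (auto simp: SL2_mult SL2_adj2)
    then show "psl_class (adj2 P ** Q) \<in> V"
      using Op(2) by blast
  qed
qed

lemma continuous_map_topological_group_mult:
  assumes "topological_group G T" "continuous_map X T f" "continuous_map X T f'"
  shows "continuous_map X T (\<lambda>x. f x \<otimes>\<^bsub>G\<^esub> f' x)"
proof -
  have "continuous_map (prod_topology T T) T (\<lambda>(x, y). x \<otimes>\<^bsub>G\<^esub> y)"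
    using assms(1) by (simp add: topological_group_def)
  from continuous_map_compose[OF continuous_map_pairedI[OF assms(2,3)] this]
  show ?thesis by (simp add: o_def)
qed

lemma continuous_map_topological_group_inv:
  assumes "topological_group G T" "continuous_map X T f"
  shows "continuous_map X T (\<lambda>x. inv\<^bsub>G\<^esub> f x)"
proof -
  have "continuous_map T T (\<lambda>x. inv\<^bsub>G\<^esub> x)"
    using assms(1) by (simp add: topological_group_def)
  from continuous_map_compose[OF assms(2) this] show ?thesis
    by (simp add: o_def)
qed

lemma topological_group_nhds_quotients:
  assumes tg: "topological_group G T" and \<phi>: "continuous_map X T \<phi>" and y: "y \<in> topspace X"
    and V: "openin T V" "\<one>\<^bsub>G\<^esub> \<in> V"
  obtains W where "openin X W" "y \<in> W" "\<And>a b. a \<in> W \<Longrightarrow> b \<in> W \<Longrightarrow> inv\<^bsub>G\<^esub> \<phi> a \<otimes>\<^bsub>G\<^esub> \<phi> b \<in> V"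
proof -
  define S where "S = {p \<in> topspace (prod_topology X X). inv\<^bsub>G\<^esub> \<phi> (fst p) \<otimes>\<^bsub>G\<^esub> \<phi> (snd p) \<in> V}"
  have "continuous_map (prod_topology X X) T (\<lambda>p. inv\<^bsub>G\<^esub> \<phi> (fst p) \<otimes>\<^bsub>G\<^esub> \<phi> (snd p))"
    by (intro continuous_map_topological_group_mult continuous_map_topological_group_inv tg
        continuous_map_compose[OF continuous_map_fst \<phi>, unfolded o_def]
        continuous_map_compose[OF continuous_map_snd \<phi>, unfolded o_def])
  then have "openin (prod_topology X X) S"
    unfolding S_def using V(1) by (rule openin_continuous_map_preimage)
  then have S_open: "\<forall>a b. (a, b) \<in> S \<longrightarrow>
      (\<exists>U U'. openin X U \<and> openin X U' \<and> a \<in> U \<and> b \<in> U' \<and> U \<times> U' \<subseteq> S)"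
    by (simp only: openin_prod_topology_alt)
  have "group G" and "\<phi> y \<in> carrier G"
    using tg \<phi> y by (auto simp: topological_group_def continuous_map_def)
  then have "(y, y) \<in> S"
    using y V(2) by (simp add: S_def group.l_inv)
  then obtain U U' where "openin X U" "openin X U'" "y \<in> U" "y \<in> U'" "U \<times> U' \<subseteq> S"
    using S_open by meson
  then show ?thesis
    by (intro that[of "U \<inter> U'"]) (auto simp: S_def)
qed

section \<open>The group H and the space X\<close>

lemma group_Hgrp: "group G \<Longrightarrow> group (Hgrp G)"
  unfolding Hgrp_def by (intro DirProd_group group_PSL2)

lemma carrier_Hgrp: "carrier (Hgrp G) = carrier PSL2 \<times> carrier G"
  by (simp add: Hgrp_def)

lemma Hgrp_mult: "(p, a) \<otimes>\<^bsub>Hgrp G\<^esub> (q, b) = (p \<otimes>\<^bsub>PSL2\<^esub> q, a \<otimes>\<^bsub>G\<^esub> b)"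
  by (simp add: Hgrp_def)

lemma Hgrp_inv:
  "group G \<Longrightarrow> M \<in> SL2 \<Longrightarrow> a \<in> carrier G \<Longrightarrow>
     inv\<^bsub>Hgrp G\<^esub> (psl_class M, a) = (psl_class (adj2 M), inv\<^bsub>G\<^esub> a)"
  by (simp add: Hgrp_def carrier_PSL2 group_PSL2 psl_class_inv)

lemma Hgrp_conj:
  assumes "group G" "M \<in> SL2" "a \<in> carrier G"
  shows "(psl_class M, a) \<otimes>\<^bsub>Hgrp G\<^esub> (psl_class N, n) \<otimes>\<^bsub>Hgrp G\<^esub> inv\<^bsub>Hgrp G\<^esub> (psl_class M, a) =
    (psl_class (M ** N ** adj2 M), a \<otimes>\<^bsub>G\<^esub> n \<otimes>\<^bsub>G\<^esub> inv\<^bsub>G\<^esub> a)"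
  using assms by (simp add: Hgrp_inv Hgrp_mult psl_class_mult)

lemma topspace_Htop: "topological_group G T \<Longrightarrow> topspace (Htop T) = carrier (Hgrp G)"
  by (simp add: Htop_def topspace_PSL2_top carrier_Hgrp topological_group_def)

lemma continuous_map_Htop_left_mult:
  assumes tg: "topological_group G T" and c: "c \<in> carrier (Hgrp G)"
  shows "continuous_map (Htop T) (Htop T) (\<lambda>h. c \<otimes>\<^bsub>Hgrp G\<^esub> h)"
proof -
  obtain p a where pa: "c = (p, a)" "p \<in> carrier PSL2" "a \<in> carrier G"
    using c by (auto simp: carrier_Hgrp)
  have "continuous_map T T (\<lambda>x. a \<otimes>\<^bsub>G\<^esub> x)"
    using continuous_map_topological_group_mult[OF tg, of T "\<lambda>x. a" "\<lambda>x. x"] pa(3) tg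
    by (simp add: topological_group_def continuous_map_id[unfolded id_def])
  then have "continuous_map (Htop T) (Htop T) (\<lambda>(q, x). (p \<otimes>\<^bsub>PSL2\<^esub> q, a \<otimes>\<^bsub>G\<^esub> x))"
    unfolding Htop_def continuous_map_prod_top
    using continuous_map_PSL2_top_left_mult[OF pa(2)] by blast
  moreover have "(\<lambda>h. c \<otimes>\<^bsub>Hgrp G\<^esub> h) = (\<lambda>(q, x). (p \<otimes>\<^bsub>PSL2\<^esub> q, a \<otimes>\<^bsub>G\<^esub> x))"
    by (auto simp: pa(1) Hgrp_mult)
  ultimately show ?thesis
    by simp
qed

lemma openin_Xtop_image:
  assumes tg: "topological_group G T" and sg: "subgroup \<Gamma> (Hgrp G)" and W: "openin (Htop T) W"
  shows "openin (Xtop G T \<Gamma>) ((\<lambda>h. \<Gamma> #>\<^bsub>Hgrp G\<^esub> h) ` W)"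
proof -
  interpret H: group "Hgrp G"
    using tg by (intro group_Hgrp) (simp add: topological_group_def)
  have topspace: "topspace (Htop T) = carrier (Hgrp G)"
    using tg by (rule topspace_Htop)
  have W_carrier: "W \<subseteq> carrier (Hgrp G)"
    using openin_subset[OF W] topspace by simp
  have \<Gamma>_carrier: "\<Gamma> \<subseteq> carrier (Hgrp G)"
    using sg by (rule subgroup.subset)
  have "{h \<in> topspace (Htop T). \<Gamma> #>\<^bsub>Hgrp G\<^esub> h \<in> (\<lambda>h. \<Gamma> #>\<^bsub>Hgrp G\<^esub> h) ` W} =
      (\<Union>\<gamma>\<in>\<Gamma>. {h \<in> topspace (Htop T). inv\<^bsub>Hgrp G\<^esub> \<gamma> \<otimes>\<^bsub>Hgrp G\<^esub> h \<in> W})"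
  proof (intro Set.set_eqI iffI)
    fix h
    assume "h \<in> {h \<in> topspace (Htop T). \<Gamma> #>\<^bsub>Hgrp G\<^esub> h \<in> (\<lambda>h. \<Gamma> #>\<^bsub>Hgrp G\<^esub> h) ` W}"
    then obtain w where h: "h \<in> carrier (Hgrp G)" and w: "w \<in> W" "\<Gamma> #>\<^bsub>Hgrp G\<^esub> h = \<Gamma> #>\<^bsub>Hgrp G\<^esub> w"
      using topspace by auto
    then have "h \<in> \<Gamma> #>\<^bsub>Hgrp G\<^esub> w"
      using H.repr_independenceD[OF sg h] by simp
    then obtain \<gamma> where "\<gamma> \<in> \<Gamma>" "h = \<gamma> \<otimes>\<^bsub>Hgrp G\<^esub> w"
      unfolding r_coset_def by blast
    moreover have "inv\<^bsub>Hgrp G\<^esub> \<gamma> \<otimes>\<^bsub>Hgrp G\<^esub> (\<gamma> \<otimes>\<^bsub>Hgrp G\<^esub> w) = w"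
      using \<open>\<gamma> \<in> \<Gamma>\<close> w(1) \<Gamma>_carrier W_carrier by (simp add: H.m_assoc[symmetric] subsetD)
    ultimately show "h \<in> (\<Union>\<gamma>\<in>\<Gamma>. {h \<in> topspace (Htop T). inv\<^bsub>Hgrp G\<^esub> \<gamma> \<otimes>\<^bsub>Hgrp G\<^esub> h \<in> W})"
      using h w(1) topspace by (intro UN_I[of \<gamma>]) auto
  next
    fix h
    assume "h \<in> (\<Union>\<gamma>\<in>\<Gamma>. {h \<in> topspace (Htop T). inv\<^bsub>Hgrp G\<^esub> \<gamma> \<otimes>\<^bsub>Hgrp G\<^esub> h \<in> W})"
    then obtain \<gamma> where \<gamma>: "\<gamma> \<in> \<Gamma>" and h: "h \<in> carrier (Hgrp G)"
      and w: "inv\<^bsub>Hgrp G\<^esub> \<gamma> \<otimes>\<^bsub>Hgrp G\<^esub> h \<in> W"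
      using topspace by auto
    have "h = \<gamma> \<otimes>\<^bsub>Hgrp G\<^esub> (inv\<^bsub>Hgrp G\<^esub> \<gamma> \<otimes>\<^bsub>Hgrp G\<^esub> h)"
      using \<gamma> h \<Gamma>_carrier by (simp add: H.m_assoc[symmetric] subsetD)
    then have "h \<in> \<Gamma> #>\<^bsub>Hgrp G\<^esub> (inv\<^bsub>Hgrp G\<^esub> \<gamma> \<otimes>\<^bsub>Hgrp G\<^esub> h)"
      using \<gamma> unfolding r_coset_def by blast
    then have "\<Gamma> #>\<^bsub>Hgrp G\<^esub> h = \<Gamma> #>\<^bsub>Hgrp G\<^esub> (inv\<^bsub>Hgrp G\<^esub> \<gamma> \<otimes>\<^bsub>Hgrp G\<^esub> h)"
      using H.repr_independence[OF _ _ sg] w W_carrier by blast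
    then show "h \<in> {h \<in> topspace (Htop T). \<Gamma> #>\<^bsub>Hgrp G\<^esub> h \<in> (\<lambda>h. \<Gamma> #>\<^bsub>Hgrp G\<^esub> h) ` W}"
      using h w topspace by auto
  qed
  moreover have "openin (Htop T) (\<Union>\<gamma>\<in>\<Gamma>. {h \<in> topspace (Htop T). inv\<^bsub>Hgrp G\<^esub> \<gamma> \<otimes>\<^bsub>Hgrp G\<^esub> h \<in> W})"
    using \<Gamma>_carrier
    by (intro openin_Union) (auto intro!: openin_continuous_map_preimage[OF _ W]
        continuous_map_Htop_left_mult[OF tg])
  ultimately show ?thesis
    using W_carrier topspace by (simp add: Xtop_def openin_quotient_topology image_mono)
qed

lemma Hgrp_nhds_one_conj_quotients:
  assumes tg: "topological_group G T" and g: "g \<in> carrier G" and y: "y \<in> carrier G"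
    and V: "openin (Htop T) V" "\<one>\<^bsub>Hgrp G\<^esub> \<in> V"
  obtains \<epsilon> W where "\<epsilon> > 0" "openin T W" "y \<in> W"
    "\<And>P Q a b. P \<in> SL2 \<Longrightarrow> Q \<in> SL2 \<Longrightarrow> dist P (mat 1) < \<epsilon> \<Longrightarrow> dist Q (mat 1) < \<epsilon> \<Longrightarrow>
       a \<in> W \<Longrightarrow> b \<in> W \<Longrightarrow>
       inv\<^bsub>Hgrp G\<^esub> (psl_class P, a \<otimes>\<^bsub>G\<^esub> g \<otimes>\<^bsub>G\<^esub> inv\<^bsub>G\<^esub> a) \<otimes>\<^bsub>Hgrp G\<^esub>
         (psl_class Q, b \<otimes>\<^bsub>G\<^esub> g \<otimes>\<^bsub>G\<^esub> inv\<^bsub>G\<^esub> b) \<in> V"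
proof -
  have gG: "group G" and topspace: "topspace T = carrier G"
    using tg by (auto simp: topological_group_def)
  interpret G: group G by (rule gG)
  have opV: "\<forall>p a. (p, a) \<in> V \<longrightarrow> (\<exists>V1 V2. openin PSL2_top V1 \<and> openin T V2 \<and>
      p \<in> V1 \<and> a \<in> V2 \<and> V1 \<times> V2 \<subseteq> V)"
    using V(1) unfolding Htop_def by (simp only: openin_prod_topology_alt)
  have "(psl_class (mat 1), \<one>\<^bsub>G\<^esub>) \<in> V"
    using V(2) by (simp add: Hgrp_def one_PSL2)
  from opV[rule_format, OF this] obtain V1 V2 where V12: "openin PSL2_top V1" "openin T V2"
      "psl_class (mat 1) \<in> V1" "\<one>\<^bsub>G\<^esub> \<in> V2" "V1 \<times> V2 \<subseteq> V"
    by blast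
  obtain \<epsilon> where \<epsilon>: "\<epsilon> > 0" "\<And>P Q. P \<in> SL2 \<Longrightarrow> Q \<in> SL2 \<Longrightarrow> dist P (mat 1) < \<epsilon> \<Longrightarrow>
      dist Q (mat 1) < \<epsilon> \<Longrightarrow> psl_class (adj2 P ** Q) \<in> V1"
    using PSL2_top_nhds_one_quotients[OF V12(1,3)] by metis
  have "continuous_map T T (\<lambda>a. a)" "continuous_map T T (\<lambda>a. g)"
    using g topspace by (simp_all add: continuous_map_id[unfolded id_def])
  then have conj: "continuous_map T T (\<lambda>a. a \<otimes>\<^bsub>G\<^esub> g \<otimes>\<^bsub>G\<^esub> inv\<^bsub>G\<^esub> a)"
    by (intro continuous_map_topological_group_mult[OF tg] continuous_map_topological_group_inv[OF tg])
  have y': "y \<in> topspace T"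
    using y topspace by simp
  obtain W where W: "openin T W" "y \<in> W" "\<And>a b. a \<in> W \<Longrightarrow> b \<in> W \<Longrightarrow>
      inv\<^bsub>G\<^esub> (a \<otimes>\<^bsub>G\<^esub> g \<otimes>\<^bsub>G\<^esub> inv\<^bsub>G\<^esub> a) \<otimes>\<^bsub>G\<^esub> (b \<otimes>\<^bsub>G\<^esub> g \<otimes>\<^bsub>G\<^esub> inv\<^bsub>G\<^esub> b) \<in> V2"
    using topological_group_nhds_quotients[OF tg conj y' V12(2,4)] by metis
  have W_carrier: "W \<subseteq> carrier G"
    using openin_subset[OF W(1)] topspace by simp
  have quotient_in_V: "inv\<^bsub>Hgrp G\<^esub> (psl_class P, a \<otimes>\<^bsub>G\<^esub> g \<otimes>\<^bsub>G\<^esub> inv\<^bsub>G\<^esub> a) \<otimes>\<^bsub>Hgrp G\<^esub>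
        (psl_class Q, b \<otimes>\<^bsub>G\<^esub> g \<otimes>\<^bsub>G\<^esub> inv\<^bsub>G\<^esub> b) \<in> V"
    if PQ: "P \<in> SL2" "Q \<in> SL2" "dist P (mat 1) < \<epsilon>" "dist Q (mat 1) < \<epsilon>"
      and ab: "a \<in> W" "b \<in> W" for P Q a b
  proof -
    have "a \<otimes>\<^bsub>G\<^esub> g \<otimes>\<^bsub>G\<^esub> inv\<^bsub>G\<^esub> a \<in> carrier G"
      using ab W_carrier g by auto
    then have "inv\<^bsub>Hgrp G\<^esub> (psl_class P, a \<otimes>\<^bsub>G\<^esub> g \<otimes>\<^bsub>G\<^esub> inv\<^bsub>G\<^esub> a) \<otimes>\<^bsub>Hgrp G\<^esub>
        (psl_class Q, b \<otimes>\<^bsub>G\<^esub> g \<otimes>\<^bsub>G\<^esub> inv\<^bsub>G\<^esub> b) =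
        (psl_class (adj2 P ** Q),
         inv\<^bsub>G\<^esub> (a \<otimes>\<^bsub>G\<^esub> g \<otimes>\<^bsub>G\<^esub> inv\<^bsub>G\<^esub> a) \<otimes>\<^bsub>G\<^esub> (b \<otimes>\<^bsub>G\<^esub> g \<otimes>\<^bsub>G\<^esub> inv\<^bsub>G\<^esub> b))"
      using PQ(1) by (simp add: Hgrp_inv[OF gG] Hgrp_mult psl_class_mult)
    also have "\<dots> \<in> V1 \<times> V2"
      using \<epsilon>(2)[OF PQ] W(3)[OF ab] by simp
    finally show ?thesis
      using V12(5) by auto
  qed
  show ?thesis
    by (rule that[OF \<epsilon>(1) W(1,2) quotient_in_V])
qed

lemma rcos_eq_imp_conj_unip_mem:
  assumes gG: "group G" and sg: "subgroup \<Gamma> (Hgrp G)"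
    and \<gamma>: "(psl_class (C ** unip t ** adj2 C), g) \<in> \<Gamma>" and C: "C \<in> SL2" and l: "l \<noteq> 0"
    and A: "A \<in> SL2" and b: "b \<in> carrier G"
    and rcos: "\<Gamma> #>\<^bsub>Hgrp G\<^esub> (psl_class A, b) = \<Gamma> #>\<^bsub>Hgrp G\<^esub> (psl_class (C ** diag2 l), \<one>\<^bsub>G\<^esub>)"
  shows "(psl_class (A ** unip (t / l^2) ** adj2 A), b \<otimes>\<^bsub>G\<^esub> g \<otimes>\<^bsub>G\<^esub> inv\<^bsub>G\<^esub> b) \<in> \<Gamma>"
proof -
  interpret G: group G by (rule gG)
  interpret H: group "Hgrp G" by (rule group_Hgrp[OF gG])
  define w h \<gamma>0 where "w = (psl_class A, b)" and "h = (psl_class (C ** diag2 l), \<one>\<^bsub>G\<^esub>)"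
    and "\<gamma>0 = (psl_class (C ** unip t ** adj2 C), g)"
  have CD: "C ** diag2 l \<in> SL2"
    using C l by (simp add: SL2_mult SL2_diag2)
  have carrier: "w \<in> carrier (Hgrp G)" "h \<in> carrier (Hgrp G)" "\<gamma>0 \<in> carrier (Hgrp G)"
    using A b CD \<gamma> subgroup.subset[OF sg] by (auto simp: w_def h_def \<gamma>0_def carrier_Hgrp carrier_PSL2)
  have "adj2 (C ** diag2 l) ** (C ** unip t ** adj2 C) ** (C ** diag2 l) =
      adj2 (diag2 l) ** (adj2 C ** C) ** unip t ** (adj2 C ** C) ** diag2 l"
    by (simp add: adj2_mult matrix_mul_assoc)
  also have "\<dots> = unip (t / l^2)"
    using C l by (simp add: adj2_mult_self diag2_conj_unip)
  finally have "inv\<^bsub>Hgrp G\<^esub> h \<otimes>\<^bsub>Hgrp G\<^esub> \<gamma>0 \<otimes>\<^bsub>Hgrp G\<^esub> inv\<^bsub>Hgrp G\<^esub> (inv\<^bsub>Hgrp G\<^esub> h) =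
      (psl_class (unip (t / l^2)), g)"
    using CD carrier(3) gG
    by (simp add: h_def \<gamma>0_def Hgrp_inv Hgrp_mult psl_class_mult carrier_Hgrp SL2_adj2)
  moreover have "w \<in> \<Gamma> #>\<^bsub>Hgrp G\<^esub> h"
    using H.repr_independenceD[OF sg carrier(1)] rcos by (simp add: w_def h_def)
  then obtain \<beta> where \<beta>: "\<beta> \<in> \<Gamma>" "w = \<beta> \<otimes>\<^bsub>Hgrp G\<^esub> h"
    unfolding r_coset_def by blast
  then have "\<beta> = w \<otimes>\<^bsub>Hgrp G\<^esub> inv\<^bsub>Hgrp G\<^esub> h"
    using carrier subgroup.subset[OF sg] by (auto simp: H.m_assoc)
  then have "\<beta> \<otimes>\<^bsub>Hgrp G\<^esub> \<gamma>0 \<otimes>\<^bsub>Hgrp G\<^esub> inv\<^bsub>Hgrp G\<^esub> \<beta> =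
      w \<otimes>\<^bsub>Hgrp G\<^esub> (inv\<^bsub>Hgrp G\<^esub> h \<otimes>\<^bsub>Hgrp G\<^esub> \<gamma>0 \<otimes>\<^bsub>Hgrp G\<^esub> inv\<^bsub>Hgrp G\<^esub> (inv\<^bsub>Hgrp G\<^esub> h))
        \<otimes>\<^bsub>Hgrp G\<^esub> inv\<^bsub>Hgrp G\<^esub> w"
    using carrier by (simp add: H.inv_mult_group H.m_assoc)
  moreover have "\<beta> \<otimes>\<^bsub>Hgrp G\<^esub> \<gamma>0 \<otimes>\<^bsub>Hgrp G\<^esub> inv\<^bsub>Hgrp G\<^esub> \<beta> \<in> \<Gamma>"
    using \<beta>(1) \<gamma> sg by (intro subgroup.m_closed subgroup.m_inv_closed) (auto simp: \<gamma>0_def)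
  ultimately show ?thesis
    using A b gG by (simp add: w_def Hgrp_conj)
qed

section \<open>Divergence of the diagonal orbit\<close>

lemma isolated_one_inv_mult_eq:
  assumes "group H" "subgroup \<Gamma> H" "V \<inter> \<Gamma> = {\<one>\<^bsub>H\<^esub>}" "x \<in> \<Gamma>" "y \<in> \<Gamma>"
    and "inv\<^bsub>H\<^esub> x \<otimes>\<^bsub>H\<^esub> y \<in> V"
  shows "x = y"
proof -
  interpret H: group H by fact
  have carrier: "x \<in> carrier H" "y \<in> carrier H"
    using assms(2,4,5) subgroup.subset by blast+
  have "inv\<^bsub>H\<^esub> x \<otimes>\<^bsub>H\<^esub> y \<in> \<Gamma>"
    using assms(2,4,5) by (intro subgroup.m_closed subgroup.m_inv_closed)
  then have "inv\<^bsub>H\<^esub> x \<otimes>\<^bsub>H\<^esub> y = \<one>\<^bsub>H\<^esub>"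
    using assms(3,6) by blast
  then have "x \<otimes>\<^bsub>H\<^esub> (inv\<^bsub>H\<^esub> x \<otimes>\<^bsub>H\<^esub> y) = x"
    using carrier by simp
  then show ?thesis
    using carrier by (simp add: H.m_assoc[symmetric])
qed

lemma limitin_Xtop_imp_eventually_conj_unip_mem:
  assumes tg: "topological_group G T" and sg: "subgroup \<Gamma> (Hgrp G)"
    and \<gamma>: "(psl_class (C ** unip t ** adj2 C), g) \<in> \<Gamma>" and C: "C \<in> SL2" and l: "\<And>k. l k \<noteq> 0"
    and lim: "limitin (Xtop G T \<Gamma>) (\<lambda>k. \<Gamma> #>\<^bsub>Hgrp G\<^esub> (psl_class (C ** diag2 (l k)), \<one>\<^bsub>G\<^esub>))
      (\<Gamma> #>\<^bsub>Hgrp G\<^esub> (psl_class Y, b)) sequentially"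
    and Y: "Y \<in> SL2" and W: "openin T W" "b \<in> W"
  shows "eventually (\<lambda>k. \<exists>A a. A \<in> ball Y 1 \<inter> SL2 \<and> a \<in> W \<and>
    (psl_class (A ** unip (t / (l k)^2) ** adj2 A), a \<otimes>\<^bsub>G\<^esub> g \<otimes>\<^bsub>G\<^esub> inv\<^bsub>G\<^esub> a) \<in> \<Gamma>) sequentially"
proof -
  have gG: "group G" and W_carrier: "W \<subseteq> carrier G"
    using tg openin_subset[OF W(1)] by (auto simp: topological_group_def)
  have "openin (Htop T) (psl_class ` (ball Y 1 \<inter> SL2) \<times> W)"
    by (simp add: Htop_def openin_prod_Times_iff openin_PSL2_top_image_ball W(1))
  then have "openin (Xtop G T \<Gamma>) ((\<lambda>h. \<Gamma> #>\<^bsub>Hgrp G\<^esub> h) ` (psl_class ` (ball Y 1 \<inter> SL2) \<times> W))"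
    by (rule openin_Xtop_image[OF tg sg])
  moreover have "\<Gamma> #>\<^bsub>Hgrp G\<^esub> (psl_class Y, b) \<in> (\<lambda>h. \<Gamma> #>\<^bsub>Hgrp G\<^esub> h) ` (psl_class ` (ball Y 1 \<inter> SL2) \<times> W)"
    using Y W(2) by auto
  ultimately have "eventually (\<lambda>k. \<Gamma> #>\<^bsub>Hgrp G\<^esub> (psl_class (C ** diag2 (l k)), \<one>\<^bsub>G\<^esub>) \<in>
      (\<lambda>h. \<Gamma> #>\<^bsub>Hgrp G\<^esub> h) ` (psl_class ` (ball Y 1 \<inter> SL2) \<times> W)) sequentially"
    using lim by (simp add: limitin_def)
  then show ?thesis
  proof (rule eventually_mono)
    fix k
    assume "\<Gamma> #>\<^bsub>Hgrp G\<^esub> (psl_class (C ** diag2 (l k)), \<one>\<^bsub>G\<^esub>) \<in>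
      (\<lambda>h. \<Gamma> #>\<^bsub>Hgrp G\<^esub> h) ` (psl_class ` (ball Y 1 \<inter> SL2) \<times> W)"
    then obtain A a where "A \<in> ball Y 1 \<inter> SL2" "a \<in> W"
      "\<Gamma> #>\<^bsub>Hgrp G\<^esub> (psl_class A, a) = \<Gamma> #>\<^bsub>Hgrp G\<^esub> (psl_class (C ** diag2 (l k)), \<one>\<^bsub>G\<^esub>)"
      by auto
    then show "\<exists>A a. A \<in> ball Y 1 \<inter> SL2 \<and> a \<in> W \<and>
        (psl_class (A ** unip (t / (l k)^2) ** adj2 A), a \<otimes>\<^bsub>G\<^esub> g \<otimes>\<^bsub>G\<^esub> inv\<^bsub>G\<^esub> a) \<in> \<Gamma>"
      using rcos_eq_imp_conj_unip_mem[OF gG sg \<gamma> C l] W_carrier by blast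
  qed
qed

lemma convergent_orbit_imp_unip_conj_eventually_const:
  assumes tg: "topological_group G T" and disc: "discrete_subgroup (Hgrp G) (Htop T) \<Gamma>"
    and \<gamma>: "(psl_class (C ** unip t ** adj2 C), g) \<in> \<Gamma>" and C: "C \<in> SL2"
    and l: "\<And>k. l k \<noteq> 0" and s: "(\<lambda>k. t / (l k)^2) \<longlonglongrightarrow> 0"
    and lim: "limitin (Xtop G T \<Gamma>) (\<lambda>k. \<Gamma> #>\<^bsub>Hgrp G\<^esub> (psl_class (C ** diag2 (l k)), \<one>\<^bsub>G\<^esub>)) y
      sequentially"
  obtains S N M where "bounded S"
    "\<And>k. k \<ge> N \<Longrightarrow> \<exists>A\<in>S \<inter> SL2. A ** unip (t / (l k)^2) ** adj2 A = M"
proof -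
  define s where "s k = t / (l k)^2" for k
  have gG: "group G" and sg: "subgroup \<Gamma> (Hgrp G)"
    using tg disc by (auto simp: topological_group_def discrete_subgroup_def)
  have g: "g \<in> carrier G"
    using \<gamma> subgroup.subset[OF sg] by (auto simp: carrier_Hgrp)
  obtain V where V: "openin (Htop T) V" "V \<inter> \<Gamma> = {\<one>\<^bsub>Hgrp G\<^esub>}"
    using disc subgroup.one_closed[OF sg] unfolding discrete_subgroup_def by metis
  have "y \<in> topspace (Xtop G T \<Gamma>)"
    using lim by (simp add: limitin_sequentially)
  then obtain Y b where y: "y = \<Gamma> #>\<^bsub>Hgrp G\<^esub> (psl_class Y, b)" "Y \<in> SL2" "b \<in> carrier G"
    by (auto simp: Xtop_def topspace_quotient_topology topspace_Htop[OF tg] carrier_Hgrp carrier_PSL2)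
  obtain \<epsilon> W where \<epsilon>: "\<epsilon> > 0" and W: "openin T W" "b \<in> W"
    and quotient_in_V: "\<And>P Q a b. P \<in> SL2 \<Longrightarrow> Q \<in> SL2 \<Longrightarrow> dist P (mat 1) < \<epsilon> \<Longrightarrow>
       dist Q (mat 1) < \<epsilon> \<Longrightarrow> a \<in> W \<Longrightarrow> b \<in> W \<Longrightarrow>
       inv\<^bsub>Hgrp G\<^esub> (psl_class P, a \<otimes>\<^bsub>G\<^esub> g \<otimes>\<^bsub>G\<^esub> inv\<^bsub>G\<^esub> a) \<otimes>\<^bsub>Hgrp G\<^esub>
         (psl_class Q, b \<otimes>\<^bsub>G\<^esub> g \<otimes>\<^bsub>G\<^esub> inv\<^bsub>G\<^esub> b) \<in> V"
    using Hgrp_nhds_one_conj_quotients[OF tg g y(3) V(1)] V(2) by blast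
  define R where "R = norm Y + 1"
  have "eventually (\<lambda>k. \<exists>A a. A \<in> ball Y 1 \<inter> SL2 \<and> a \<in> W \<and>
      (psl_class (A ** unip (s k) ** adj2 A), a \<otimes>\<^bsub>G\<^esub> g \<otimes>\<^bsub>G\<^esub> inv\<^bsub>G\<^esub> a) \<in> \<Gamma>) sequentially"
    unfolding s_def using lim
    by (intro limitin_Xtop_imp_eventually_conj_unip_mem[OF tg sg \<gamma> C l _ y(2) W]) (simp add: y(1))
  moreover have "(\<lambda>k. \<bar>s k\<bar> * R^2) \<longlonglongrightarrow> 0"
    using tendsto_mult_left_zero[OF tendsto_rabs_zero[OF s]] by (simp add: s_def)
  then have "eventually (\<lambda>k. \<bar>s k\<bar> * R^2 < \<epsilon>) sequentially"
    using \<epsilon> by (rule order_tendstoD(2))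
  ultimately obtain N where N: "\<And>k. k \<ge> N \<Longrightarrow> (\<exists>A a. A \<in> ball Y 1 \<inter> SL2 \<and> a \<in> W \<and>
      (psl_class (A ** unip (s k) ** adj2 A), a \<otimes>\<^bsub>G\<^esub> g \<otimes>\<^bsub>G\<^esub> inv\<^bsub>G\<^esub> a) \<in> \<Gamma>) \<and> \<bar>s k\<bar> * R^2 < \<epsilon>"
    unfolding eventually_sequentially by (metis (no_types, lifting) eventually_conj eventually_sequentially)
  have close: "dist (A ** unip (s k) ** adj2 A) (mat 1) < \<epsilon>"
    if "k \<ge> N" "A \<in> ball Y 1 \<inter> SL2" for k A
  proof -
    have "norm A \<le> R"
      using that(2) norm_triangle_sub[of A Y] by (simp add: R_def dist_norm norm_minus_commute)
    then show ?thesis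
      using dist_unip_conj_one_le[of A R "s k"] N[OF that(1)] that(2) by simp
  qed
  obtain A0 a0 where A0: "A0 \<in> ball Y 1 \<inter> SL2" "a0 \<in> W"
    "(psl_class (A0 ** unip (s N) ** adj2 A0), a0 \<otimes>\<^bsub>G\<^esub> g \<otimes>\<^bsub>G\<^esub> inv\<^bsub>G\<^esub> a0) \<in> \<Gamma>"
    using N[of N] by blast
  show ?thesis
  proof (rule that)
    fix k
    assume k: "k \<ge> N"
    then obtain A a where A: "A \<in> ball Y 1 \<inter> SL2" "a \<in> W"
      "(psl_class (A ** unip (s k) ** adj2 A), a \<otimes>\<^bsub>G\<^esub> g \<otimes>\<^bsub>G\<^esub> inv\<^bsub>G\<^esub> a) \<in> \<Gamma>"
      using N by blast
    have "(psl_class (A0 ** unip (s N) ** adj2 A0), a0 \<otimes>\<^bsub>G\<^esub> g \<otimes>\<^bsub>G\<^esub> inv\<^bsub>G\<^esub> a0) =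
        (psl_class (A ** unip (s k) ** adj2 A), a \<otimes>\<^bsub>G\<^esub> g \<otimes>\<^bsub>G\<^esub> inv\<^bsub>G\<^esub> a)"
      using A0 A close[OF order_refl A0(1)] close[OF k A(1)]
      by (intro isolated_one_inv_mult_eq[OF group_Hgrp[OF gG] sg V(2)] quotient_in_V
          SL2_mult SL2_adj2 SL2_unip) auto
    then have "A ** unip (s k) ** adj2 A = A0 ** unip (s N) ** adj2 A0"
      using A0 A unip_conj_eq_if_psl_class_eq by auto
    then show "\<exists>A\<in>ball Y 1 \<inter> SL2. A ** unip (t / (l k)^2) ** adj2 A = A0 ** unip (s N) ** adj2 A0"
      using A(1) by (auto simp: s_def)
  qed simp
qed

lemma semi_parabolicE:
  assumes "semi_parabolic G (f, g)"
  obtains C t where "C \<in> SL2" "t \<noteq> 0" "f = psl_class (C ** unip t ** adj2 C)"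
proof -
  obtain c u where c: "c \<in> carrier PSL2" and u: "u \<in> U_group" "u \<noteq> \<one>\<^bsub>PSL2\<^esub>"
    and f: "f = c \<otimes>\<^bsub>PSL2\<^esub> u \<otimes>\<^bsub>PSL2\<^esub> inv\<^bsub>PSL2\<^esub> c"
    using assms by (auto simp: semi_parabolic_def)
  obtain C where C: "C \<in> SL2" "c = psl_class C"
    using c by (auto simp: carrier_PSL2)
  obtain t where t: "u = psl_class (unip t)"
    using u(1) by (auto simp: U_group_def psl_unip_def unip_def)
  have "t \<noteq> 0"
    using u(2) by (auto simp: t one_PSL2 unip_eq_one_iff[symmetric])
  moreover have "f = psl_class (C ** unip t ** adj2 C)"
    using C by (simp add: f t psl_class_inv psl_class_mult)
  ultimately show ?thesis
    using C(1) that by blast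
qed

lemma Xact_rcos_psl_diag:
  assumes "group G" "subgroup \<Gamma> (Hgrp G)" "C \<in> SL2" "l \<noteq> 0"
  shows "Xact G (\<Gamma> #>\<^bsub>Hgrp G\<^esub> (psl_class C, \<one>\<^bsub>G\<^esub>)) (psl_diag l) =
    \<Gamma> #>\<^bsub>Hgrp G\<^esub> (psl_class (C ** diag2 l), \<one>\<^bsub>G\<^esub>)"
proof -
  interpret G: group G by fact
  interpret H: group "Hgrp G" by (rule group_Hgrp[OF assms(1)])
  have "Xact G (\<Gamma> #>\<^bsub>Hgrp G\<^esub> (psl_class C, \<one>\<^bsub>G\<^esub>)) (psl_diag l) =
      \<Gamma> #>\<^bsub>Hgrp G\<^esub> ((psl_class C, \<one>\<^bsub>G\<^esub>) \<otimes>\<^bsub>Hgrp G\<^esub> (psl_class (diag2 l), \<one>\<^bsub>G\<^esub>))"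
    unfolding Xact_def psl_diag_def diag2_def[symmetric] using assms
    by (intro H.coset_mult_assoc subgroup.subset) (auto simp: carrier_Hgrp carrier_PSL2 SL2_diag2)
  then show ?thesis
    by (simp add: Hgrp_mult psl_class_mult)
qed

lemma diag_orbit_not_convergent:
  assumes tg: "topological_group G T" and disc: "discrete_subgroup (Hgrp G) (Htop T) \<Gamma>"
    and \<gamma>: "(psl_class (C ** unip t ** adj2 C), g) \<in> \<Gamma>" and C: "C \<in> SL2" and t: "t \<noteq> 0"
    and lam: "\<forall>n. lam n > 1" "filterlim lam at_top sequentially" and r: "strict_mono r"
  shows "\<not> limitin (Xtop G T \<Gamma>)
    (\<lambda>k. Xact G (\<Gamma> #>\<^bsub>Hgrp G\<^esub> (psl_class C, \<one>\<^bsub>G\<^esub>)) (psl_diag (lam (r k)))) y sequentially"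
proof
  assume lim: "limitin (Xtop G T \<Gamma>)
    (\<lambda>k. Xact G (\<Gamma> #>\<^bsub>Hgrp G\<^esub> (psl_class C, \<one>\<^bsub>G\<^esub>)) (psl_diag (lam (r k)))) y sequentially"
  define l where "l k = lam (r k)" for k
  have l: "l k \<noteq> 0" for k
    using lam(1) unfolding l_def by (metis not_one_less_zero)
  have "filterlim l at_top sequentially"
    unfolding l_def using lam(2) by (rule filterlim_compose[OF _ filterlim_subseq[OF r]])
  then have s: "(\<lambda>k. t / (l k)^2) \<longlonglongrightarrow> 0"
    by (intro tendsto_divide_0[OF tendsto_const] filterlim_at_top_imp_at_infinity
        filterlim_pow_at_top) auto
  have "group G" "subgroup \<Gamma> (Hgrp G)"
    using tg disc by (auto simp: topological_group_def discrete_subgroup_def)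
  then have "limitin (Xtop G T \<Gamma>) (\<lambda>k. \<Gamma> #>\<^bsub>Hgrp G\<^esub> (psl_class (C ** diag2 (l k)), \<one>\<^bsub>G\<^esub>)) y
      sequentially"
    using lim by (simp add: l_def Xact_rcos_psl_diag[OF _ _ C l[unfolded l_def]])
  then obtain S N M where S: "bounded S"
    and const: "\<And>k. k \<ge> N \<Longrightarrow> \<exists>A\<in>S \<inter> SL2. A ** unip (t / (l k)^2) ** adj2 A = M"
    using convergent_orbit_imp_unip_conj_eventually_const[OF tg disc \<gamma> C l s] by blast
  show False
    using unip_conjugates_not_eventually_constant[OF S s _ const] t l by simp
qed

theorem mainTheorem6:
  fixes G :: "'g monoid" and T :: "'g topology" and \<Gamma> :: "(mat2 set \<times> 'g) set"
  assumes "lie_group G T" and "connected_space T"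
    and "discrete_subgroup (Hgrp G) (Htop T) \<Gamma>"
    and "\<exists>\<gamma>\<in>\<Gamma>. semi_parabolic G \<gamma>"
  shows "\<exists>x\<in>Xspace G \<Gamma>. \<forall>lam :: nat \<Rightarrow> real.
           (\<forall>n. lam n > 1) \<and> filterlim lam at_top sequentially \<longrightarrow>
           \<not> (\<exists>r y. strict_mono r \<and>
                limitin (Xtop G T \<Gamma>) (\<lambda>k. Xact G x (psl_diag (lam (r k)))) y sequentially)"
proof -
  have tg: "topological_group G T"
    using assms(1) by (simp add: lie_group_def)
  obtain f g where "(f, g) \<in> \<Gamma>" "semi_parabolic G (f, g)"
    using assms(4) by auto
  then obtain C t where C: "C \<in> SL2" and t: "t \<noteq> 0"
    and \<gamma>: "(psl_class (C ** unip t ** adj2 C), g) \<in> \<Gamma>"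
    by (metis semi_parabolicE)
  have "\<Gamma> #>\<^bsub>Hgrp G\<^esub> (psl_class C, \<one>\<^bsub>G\<^esub>) \<in> Xspace G \<Gamma>"
    using C tg group.is_monoid
    by (auto simp: Xspace_def carrier_Hgrp carrier_PSL2 topological_group_def)
  then show ?thesis
    using diag_orbit_not_convergent[OF tg assms(3) \<gamma> C t] by blast
qed

end
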